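(* Consider the following regulation game. A random triple $(\theta,s,d)$ (agent type, training state, deployment state) has joint distribution $\pi$. Prediction functions are vectors $f\in\mathbb{R}^n$. Given $s$ (and $\theta$), expected agent utility and expected principal welfare are $\overline{U}_\theta(f;s) = -(f-\bar u)'\overline{\Omega}_U(f-\bar u)$ and $\overline{W}(f;s) = -(f-\bar w)'\overline{\Omega}_W(f-\bar w)$, with bliss points $\bar u=\bar u(s,\theta)$, $\bar w=\bar w(s)\in\mathbb{R}^n$ and symmetric positive semidefinite weight matrices. The principal first (knowing only $\pi$) chooses a linear explainer, i.e. a $k\times n$ real matrix $\mathcal{E}$, and possibly an ex-ante restriction $\mathcal{F}=\{f: Af=a\}$ with $A\in\mathbb{R}^{m\times n}$, $a\in\mathbb{R}^m$ not depending on $s,\theta$; after observing $s$ she dictates the value $\mathcal{E}f=e(s)$ of the explanation (failing the audit has infinite cost to the agent). The agent, knowing $\theta$ and $s$, chooses $f$ maximizing $\overline{U}_\theta(f;s)$ subject to $Af=a$ and $\mathcal{E}f=e(s)$. Assume $\overline{\Omega}_U$ is fixed (non-random) and of full rank, and that $\operatorname{rank}\mathop{E}_\pi[(\bar u-\bar w)(\bar u-\bar w)']\le k$. Then there is an explainer that achieves the first-best solution $f=\bar w$ of the principal, yielding maximal expected welfare $\overline{W}(f;s)\equiv 0$ across all states and for all agent types. Further, the optimal solution does not include any ex-ante restrictions.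
   Context: The first-best solution is the principal's bliss point $f=\bar w(s)$. *)

theory Defs
  imports "HOL-Probability.Probability"
begin

definition quad_payoff :: "real^'n^'n \<Rightarrow> real^'n \<Rightarrow> real^'n \<Rightarrow> real" where
  "quad_payoff Om b f = - ((f - b) \<bullet> (Om *v (f - b)))"

definition psd_matrix :: "real^'n^'n \<Rightarrow> bool" where
  "psd_matrix M \<longleftrightarrow> transpose M = M \<and> (\<forall>x. 0 \<le> x \<bullet> (M *v x))"

definition outer :: "real^'n \<Rightarrow> real^'n^'n" where
  "outer v = (\<chi> i j. v $ i * v $ j)"

definition agent_optimal :: "real^'n^'n \<Rightarrow> real^'n \<Rightarrow> (real^'n) set \<Rightarrow> real^'n \<Rightarrow> bool" where
  "agent_optimal OmU ub C f \<longleftrightarrow> f \<in> C \<and> (\<forall>g\<in>C. quad_payoff OmU ub g \<le> quad_payoff OmU ub f)"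

end

theory Submission
  imports Defs
begin

text \<open>Let \<open>\<Sigma> = \<integral> (ubar - wbar)(ubar - wbar)' d\<pi>\<close>. A direction \<open>z\<close> orthogonal to
  \<open>range \<Sigma>\<close> has \<open>\<integral> (z \<bullet> (ubar - wbar))\<^sup>2 d\<pi> = z \<bullet> \<Sigma> z = 0\<close>, so \<open>ubar - wbar\<close> lies almost
  surely in \<open>range \<Sigma>\<close>, a space of dimension at most \<open>k\<close>. Choose a \<open>k \<times> n\<close> explainer \<open>E\<close>
  whose row space contains \<open>OmU (range \<Sigma>)\<close> and dictate \<open>e s = E wbar s\<close>. Then the gradient
  \<open>OmU (ubar - wbar)\<close> of the agent's utility at \<open>wbar\<close> lies in the row space of \<open>E\<close>: this is
  the Lagrange condition making \<open>wbar\<close> optimal on \<open>{g. E g = e s}\<close>, and positive definiteness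
  of \<open>OmU\<close> makes it the unique optimum.\<close>

lemma inner_symmetric_matrix_commute:
  "transpose M = M \<Longrightarrow> (x::real^'n) \<bullet> (M *v y) = y \<bullet> (M *v x)"
  by (metis dot_lmul_matrix vector_transpose_matrix inner_commute)

lemma nonneg_linear_plus_quadratic_imp_eq_0:
  fixes b q :: real
  assumes "\<And>t. 0 \<le> b * t + q * t\<^sup>2"
  shows "b = 0"
proof -
  define s where "s = 1 / (\<bar>q\<bar> + 1)"
  have s_pos: "0 < s" and qs: "q * s < 1"
    by (auto simp: s_def field_simps)
  have "b * (- b * s) + q * (- b * s)\<^sup>2 = b\<^sup>2 * s * (q * s - 1)"
    by (simp add: power2_eq_square algebra_simps)
  then have "0 \<le> b\<^sup>2 * s * (q * s - 1)" using assms[of "- b * s"] by simp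
  then have "b\<^sup>2 * s \<le> 0" using qs by (simp add: mult_le_0_iff zero_le_mult_iff)
  then show ?thesis using s_pos by (simp add: mult_le_0_iff)
qed

lemma psd_matrix_quadratic_form_eq_0:
  assumes "psd_matrix M" and "(x::real^'n) \<bullet> (M *v x) = 0"
  shows "M *v x = 0"
proof -
  have sym: "transpose M = M" and nonneg: "\<And>z. 0 \<le> z \<bullet> (M *v z)"
    using assms(1) by (auto simp: psd_matrix_def)
  define y where "y = M *v x"
  have "0 \<le> 2 * (y \<bullet> y) * t + (y \<bullet> (M *v y)) * t\<^sup>2" for t
  proof -
    have "0 \<le> (x + t *\<^sub>R y) \<bullet> (M *v (x + t *\<^sub>R y))" by (rule nonneg)
    also have "\<dots> = x \<bullet> (M *v x) + t * (x \<bullet> (M *v y)) + t * (y \<bullet> (M *v x)) + t\<^sup>2 * (y \<bullet> (M *v y))"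
      by (simp add: matrix_vector_right_distrib matrix_vector_mult_scaleR inner_add_left
          inner_add_right power2_eq_square algebra_simps)
    also have "x \<bullet> (M *v y) = y \<bullet> (M *v x)" by (rule inner_symmetric_matrix_commute[OF sym])
    finally show ?thesis using assms(2) by (simp add: y_def algebra_simps)
  qed
  then have "2 * (y \<bullet> y) = 0" by (rule nonneg_linear_plus_quadratic_imp_eq_0)
  then show ?thesis by (simp add: y_def)
qed

lemma quadratic_form_outer: "(v::real^'n) \<bullet> (outer d *v v) = (v \<bullet> d)\<^sup>2"
  by (simp add: outer_def matrix_vector_mult_def inner_vec_def power2_eq_square
      sum_distrib_left sum_distrib_right sum_product algebra_simps)

lemma bounded_linear_quadratic_form: "bounded_linear (\<lambda>A::real^'n^'n. v \<bullet> (A *v v))"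
  unfolding linear_conv_bounded_linear[symmetric]
  by (rule linearI) (simp_all add: matrix_vector_mult_def inner_vec_def algebra_simps
      sum.distrib sum_distrib_left)

lemma
  fixes D :: "'a \<Rightarrow> real^'n"
  assumes "integrable M (\<lambda>x. outer (D x))"
  shows integrable_inner_square_of_second_moment: "integrable M (\<lambda>x. (z \<bullet> D x)\<^sup>2)"
    and quadratic_form_second_moment:
      "z \<bullet> (integral\<^sup>L M (\<lambda>x. outer (D x)) *v z) = integral\<^sup>L M (\<lambda>x. (z \<bullet> D x)\<^sup>2)"
  using integrable_bounded_linear[OF bounded_linear_quadratic_form[of z] assms]
    integral_bounded_linear[OF bounded_linear_quadratic_form[of z] assms]
  by (simp_all add: quadratic_form_outer)

lemma AE_in_range_second_moment:
  fixes D :: "'a \<Rightarrow> real^'n"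
  assumes int: "integrable M (\<lambda>x. outer (D x))"
  shows "AE x in M. D x \<in> range ((*v) (integral\<^sup>L M (\<lambda>x. outer (D x))))"
proof -
  define \<Sigma> where "\<Sigma> = integral\<^sup>L M (\<lambda>x. outer (D x))"
  define R where "R = range ((*v) \<Sigma>)"
  have "subspace R"
    unfolding R_def by (intro linear_subspace_image matrix_vector_mul_linear subspace_UNIV)
  have null_direction: "AE x in M. z \<bullet> D x = 0" if "z \<in> R\<^sup>\<bottom>" for z
  proof -
    have "z \<bullet> (\<Sigma> *v z) = 0"
      using that by (auto simp: R_def orthogonal_comp_def orthogonal_def inner_commute)
    then have "integral\<^sup>L M (\<lambda>x. (z \<bullet> D x)\<^sup>2) = 0"
      by (simp add: \<Sigma>_def quadratic_form_second_moment[OF int])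
    then show ?thesis
      using integral_nonneg_eq_0_iff_AE[OF integrable_inner_square_of_second_moment[OF int]] by simp
  qed
  obtain B where B: "B \<subseteq> R\<^sup>\<bottom>" "independent B" "R\<^sup>\<bottom> \<subseteq> span B"
    by (rule basis_exists[of "R\<^sup>\<bottom>"])
  have "finite B" using B(2) independent_bound by blast
  then have "AE x in M. \<forall>b\<in>B. b \<bullet> D x = 0"
    using B(1) null_direction by (intro AE_finite_allI) auto
  then show ?thesis
  proof (rule eventually_mono)
    fix x assume "\<forall>b\<in>B. b \<bullet> D x = 0"
    then have "orthogonal y (D x)" if "y \<in> R\<^sup>\<bottom>" for y
      using orthogonal_to_span[of y B "D x"] B(3) that
      by (auto simp: orthogonal_def inner_commute)
    then have "D x \<in> R\<^sup>\<bottom>\<^sup>\<bottom>" by (auto simp: orthogonal_comp_def)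
    then show "D x \<in> range ((*v) (integral\<^sup>L M (\<lambda>x. outer (D x))))"
      using orthogonal_comp_self[OF \<open>subspace R\<close>] by (simp add: R_def \<Sigma>_def)
  qed
qed

lemma subspace_subset_row_space:
  fixes V :: "(real^'n) set"
  assumes "subspace V" and "dim V \<le> CARD('k)"
  obtains E :: "real^'n^'k" where "V \<subseteq> range (\<lambda>l. l v* E)"
proof -
  obtain T :: "(real^'k) set" where "subspace T" and "dim T = dim V"
    using choose_subspace_of_subspace[of "dim V" "UNIV :: (real^'k) set"] assms(2)
    by (auto simp: dim_UNIV)
  then obtain f :: "real^'k \<Rightarrow> real^'n" where "linear f" and "f ` T = V"
    using subspace_isomorphism[OF _ assms(1)] by blast
  then have "V \<subseteq> range (\<lambda>l. l v* transpose (matrix f))" by (auto simp: matrix_works)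
  then show ?thesis by (rule that)
qed

lemma image_matrix_range_subset_row_space:
  fixes \<Sigma> :: "real^'m^'n" and A :: "real^'n^'p"
  assumes "rank \<Sigma> \<le> CARD('k)"
  obtains E :: "real^'p^'k" where "(*v) A ` range ((*v) \<Sigma>) \<subseteq> range (\<lambda>l. l v* E)"
proof (rule subspace_subset_row_space)
  show "subspace ((*v) A ` range ((*v) \<Sigma>))"
    by (intro linear_subspace_image matrix_vector_mul_linear subspace_UNIV)
  have "dim ((*v) A ` range ((*v) \<Sigma>)) \<le> rank \<Sigma>"
    unfolding rank_dim_range by (intro dim_image_le matrix_vector_mul_linear)
  with assms show "dim ((*v) A ` range ((*v) \<Sigma>)) \<le> CARD('k)" by simp
qed

lemma quad_payoff_orthogonal_split:
  fixes Om :: "real^'n^'n"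
  assumes "transpose Om = Om" and "(g - w) \<bullet> (Om *v (u - w)) = 0"
  shows "quad_payoff Om u g = quad_payoff Om u w - (g - w) \<bullet> (Om *v (g - w))"
proof -
  have "g - u = (g - w) - (u - w)" and "w - u = - (u - w)" by simp_all
  moreover have "(u - w) \<bullet> (Om *v (g - w)) = 0"
    using assms by (metis inner_symmetric_matrix_commute)
  ultimately show ?thesis
    using assms(2) unfolding quad_payoff_def
    by (simp only: matrix_vector_mult_diff_distrib inner_diff_left inner_diff_right vec.neg
        inner_minus_left inner_minus_right)
qed

lemma agent_optimal_on_fiber_iff:
  fixes OmU :: "real^'n^'n" and E :: "real^'n^'k"
  assumes psd: "psd_matrix OmU" and inj: "inj ((*v) OmU)"
    and lagrange: "OmU *v (u - w) \<in> range (\<lambda>l. l v* E)"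
  shows "{f. agent_optimal OmU u {g. E *v g = E *v w} f} = {w}"
proof -
  have sym: "transpose OmU = OmU" and nonneg: "\<And>z. 0 \<le> z \<bullet> (OmU *v z)"
    using psd by (auto simp: psd_matrix_def)
  obtain l where multiplier: "OmU *v (u - w) = l v* E" using lagrange by blast
  have split: "quad_payoff OmU u g = quad_payoff OmU u w - (g - w) \<bullet> (OmU *v (g - w))"
    if "E *v g = E *v w" for g
  proof (rule quad_payoff_orthogonal_split[OF sym])
    have "E *v (g - w) = 0" using that by (simp add: matrix_vector_mult_diff_distrib)
    then show "(g - w) \<bullet> (OmU *v (u - w)) = 0"
      by (metis multiplier dot_lmul_matrix inner_commute inner_zero_right)
  qed
  have "quad_payoff OmU u g \<le> quad_payoff OmU u w" if "E *v g = E *v w" for g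
    using split[OF that] nonneg[of "g - w"] by linarith
  then have "agent_optimal OmU u {g. E *v g = E *v w} w"
    by (simp add: agent_optimal_def)
  moreover have "f = w" if "agent_optimal OmU u {g. E *v g = E *v w} f" for f
  proof -
    from that have fiber: "E *v f = E *v w"
      and opt: "quad_payoff OmU u w \<le> quad_payoff OmU u f"
      by (auto simp: agent_optimal_def)
    have "(f - w) \<bullet> (OmU *v (f - w)) \<le> 0" using opt split[OF fiber] by simp
    then have "(f - w) \<bullet> (OmU *v (f - w)) = 0" using nonneg[of "f - w"] by linarith
    then have "OmU *v (f - w) = 0" by (rule psd_matrix_quadratic_form_eq_0[OF psd])
    then show "f = w" using inj by (metis injD matrix_vector_mult_0_right eq_iff_diff_eq_0)
  qed
  ultimately show ?thesis by blast
qed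

theorem proposition1:
  fixes \<pi> :: "('ty \<times> 'st \<times> 'dep) measure"
    and ubar :: "'st \<Rightarrow> 'ty \<Rightarrow> real^'n"
    and wbar :: "'st \<Rightarrow> real^'n"
    and OmU :: "real^'n^'n"
    and OmW :: "'st \<Rightarrow> real^'n^'n"
  assumes "prob_space \<pi>"
    and "psd_matrix OmU"
    and "rank OmU = CARD('n)"
    and "\<And>s. psd_matrix (OmW s)"
    and "integrable \<pi> (\<lambda>(\<theta>, s, d). outer (ubar s \<theta> - wbar s))"
    and "rank (integral\<^sup>L \<pi> (\<lambda>(\<theta>, s, d). outer (ubar s \<theta> - wbar s))) \<le> CARD('k)"
  shows "\<exists>(E :: real^'n^'k) (e :: 'st \<Rightarrow> real^'k).
           AE x in \<pi>. (case x of (\<theta>, s, d) \<Rightarrow>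
              {f. agent_optimal OmU (ubar s \<theta>) {g. E *v g = e s} f} = {wbar s}
              \<and> quad_payoff (OmW s) (wbar s) (wbar s) = 0)"
proof -
  define D where "D = (\<lambda>(\<theta>, s, d::'dep). ubar s \<theta> - wbar s)"
  define \<Sigma> where "\<Sigma> = integral\<^sup>L \<pi> (\<lambda>x. outer (D x))"
  have outer_D: "(\<lambda>(\<theta>, s, d). outer (ubar s \<theta> - wbar s)) = (\<lambda>x. outer (D x))"
    by (auto simp: D_def)
  have D_in_range: "AE x in \<pi>. D x \<in> range ((*v) \<Sigma>)"
    unfolding \<Sigma>_def by (rule AE_in_range_second_moment) (use assms(5) outer_D in simp)
  have "rank \<Sigma> \<le> CARD('k)" using assms(6) by (simp add: \<Sigma>_def outer_D)
  then obtain E :: "real^'n^'k" where E: "(*v) OmU ` range ((*v) \<Sigma>) \<subseteq> range (\<lambda>l. l v* E)"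
    by (rule image_matrix_range_subset_row_space)
  have inj: "inj ((*v) OmU)" using assms(3) full_rank_injective by blast
  have optimal_at_wbar:
    "{f. agent_optimal OmU (ubar s \<theta>) {g. E *v g = E *v wbar s} f} = {wbar s}"
    if "D (\<theta>, s, d) \<in> range ((*v) \<Sigma>)" for \<theta> s d
  proof (rule agent_optimal_on_fiber_iff[OF assms(2) inj])
    show "OmU *v (ubar s \<theta> - wbar s) \<in> range (\<lambda>l. l v* E)"
      using subsetD[OF E imageI[OF that]] by (simp add: D_def)
  qed
  show ?thesis
  proof (intro exI)
    show "AE x in \<pi>. (case x of (\<theta>, s, d) \<Rightarrow>
        {f. agent_optimal OmU (ubar s \<theta>) {g. E *v g = E *v wbar s} f} = {wbar s}
        \<and> quad_payoff (OmW s) (wbar s) (wbar s) = 0)" (is "AE x in \<pi>. ?P x")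
      using D_in_range
    proof (rule eventually_mono)
      fix x assume "D x \<in> range ((*v) \<Sigma>)"
      moreover obtain \<theta> s d where "x = (\<theta>, s, d)" by (rule prod_cases3)
      ultimately show "?P x" using optimal_at_wbar by (simp add: quad_payoff_def)
    qed
  qed
qed

end
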